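(* Let $T$ be a tree on $n\ge 1$ vertices. Then $\mathrm{dearth}(T)\ge \frac{1}{3}n-1$.
   Context: For a tree $T$, let $V_3(T)$ be the set of vertices of degree at least $3$, and $d(v)$ the degree of $v$ in $T$. Two vertices $u,v$ form an odd pair if they are non-adjacent in $T$ and the length of the unique $u$–$v$ path in $T$ is odd; $\mathrm{op}(T)$ is the number of (unordered) odd pairs. The dearth of $T$ is $\mathrm{dearth}(T)=\sum_{v\in V_3(T)}\frac{1}{6}d(v)(d(v)-1)+\mathrm{op}(T)$. *)

theory Defs
  imports Complex_Main
begin

definition simple_graph :: "'a set \<Rightarrow> ('a \<Rightarrow> 'a \<Rightarrow> bool) \<Rightarrow> bool" where
  "simple_graph V E \<longleftrightarrow> finite V \<and> (\<forall>u v. E u v \<longrightarrow> u \<in> V \<and> v \<in> V)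
     \<and> (\<forall>u v. E u v \<longrightarrow> E v u) \<and> (\<forall>v. \<not> E v v)"

text \<open>A path: a nonempty list of distinct vertices of V, consecutive ones adjacent.
Its length is the number of edges, i.e. length minus one.\<close>

definition is_path :: "'a set \<Rightarrow> ('a \<Rightarrow> 'a \<Rightarrow> bool) \<Rightarrow> 'a list \<Rightarrow> bool" where
  "is_path V E p \<longleftrightarrow> p \<noteq> [] \<and> distinct p \<and> set p \<subseteq> V
     \<and> (\<forall>i. Suc i < length p \<longrightarrow> E (p ! i) (p ! Suc i))"

definition connected_graph :: "'a set \<Rightarrow> ('a \<Rightarrow> 'a \<Rightarrow> bool) \<Rightarrow> bool" where
  "connected_graph V E \<longleftrightarrow> (\<forall>u\<in>V. \<forall>v\<in>V. \<exists>p. is_path V E p \<and> hd p = u \<and> last p = v)"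

definition acyclic_graph :: "'a set \<Rightarrow> ('a \<Rightarrow> 'a \<Rightarrow> bool) \<Rightarrow> bool" where
  "acyclic_graph V E \<longleftrightarrow> \<not> (\<exists>p. is_path V E p \<and> length p \<ge> 3 \<and> E (last p) (hd p))"

definition is_tree :: "'a set \<Rightarrow> ('a \<Rightarrow> 'a \<Rightarrow> bool) \<Rightarrow> bool" where
  "is_tree V E \<longleftrightarrow> simple_graph V E \<and> V \<noteq> {} \<and> connected_graph V E \<and> acyclic_graph V E"

definition degree :: "'a set \<Rightarrow> ('a \<Rightarrow> 'a \<Rightarrow> bool) \<Rightarrow> 'a \<Rightarrow> nat" where
  "degree V E v = card {u\<in>V. E u v}"

text \<open>Odd pair: non-adjacent vertices u, v joined by a path of odd length
(in a tree this is the unique u-v path).\<close>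

definition odd_pair :: "'a set \<Rightarrow> ('a \<Rightarrow> 'a \<Rightarrow> bool) \<Rightarrow> 'a \<Rightarrow> 'a \<Rightarrow> bool" where
  "odd_pair V E u v \<longleftrightarrow> u \<in> V \<and> v \<in> V \<and> \<not> E u v \<and>
     (\<exists>p. is_path V E p \<and> hd p = u \<and> last p = v \<and> odd (length p - 1))"

definition op_count :: "'a set \<Rightarrow> ('a \<Rightarrow> 'a \<Rightarrow> bool) \<Rightarrow> nat" where
  "op_count V E = card {{u, v} | u v. odd_pair V E u v}"

definition dearth :: "'a set \<Rightarrow> ('a \<Rightarrow> 'a \<Rightarrow> bool) \<Rightarrow> real" where
  "dearth V E = (\<Sum>v\<in>{v\<in>V. degree V E v \<ge> 3}.
       real (degree V E v) * (real (degree V E v) - 1) / 6) + real (op_count V E)"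

end

theory Submission
  imports Defs
begin

text \<open>Let \<open>x\<close> be a leaf of \<open>T\<close> with neighbour \<open>y\<close> of degree \<open>d\<close>. The distances from any vertex
  \<open>v\<close> to \<open>x\<close> and to \<open>y\<close> differ by one, so every \<open>v\<close> outside the closed neighbourhood of \<open>y\<close>
  forms an odd pair with \<open>x\<close> or with \<open>y\<close>, and these pairs are distinct for distinct \<open>v\<close>.
  Hence \<open>op(T) \<ge> n - d - 1\<close>. For \<open>d \<le> 2\<close> this gives \<open>n - 3 \<ge> n/3 - 1\<close> once \<open>n \<ge> 3\<close>;
  for \<open>d \<ge> 3\<close> the contribution \<open>d(d - 1)/6\<close> of \<open>y\<close> compensates, since
  \<open>d(d - 1)/6 - d + 2(d + 1)/3 = (d - 3/2)\<^sup>2/6 + 7/24 \<ge> 0\<close>.\<close>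

lemma simple_graph_sym: "simple_graph V E \<Longrightarrow> E u v \<Longrightarrow> E v u"
  by (simp add: simple_graph_def)

lemma simple_graph_irrefl: "simple_graph V E \<Longrightarrow> \<not> E v v"
  by (simp add: simple_graph_def)

lemma simple_graph_adj_in_V: "simple_graph V E \<Longrightarrow> E u v \<Longrightarrow> u \<in> V \<and> v \<in> V"
  by (simp add: simple_graph_def)

lemma degree_less_card:
  assumes "simple_graph V E" "v \<in> V"
  shows "degree V E v < card V"
proof -
  have "{u \<in> V. E u v} \<subset> V"
    using assms by (auto simp: simple_graph_def)
  then show ?thesis
    unfolding degree_def using assms(1) by (simp add: psubset_card_mono simple_graph_def)
qed

lemma is_path_length_le_card: "is_path V E p \<Longrightarrow> finite V \<Longrightarrow> length p \<le> card V"
  unfolding is_path_def by (metis card_mono distinct_card)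

lemma is_path_Cons:
  assumes "is_path V E p" "u \<in> V" "u \<notin> set p" "E u (hd p)"
  shows "is_path V E (u # p)"
  using assms unfolding is_path_def
  by (auto simp: hd_conv_nth nth_Cons split: nat.split)

lemma is_path_snoc:
  assumes "is_path V E p" "x \<in> V" "x \<notin> set p" "E (last p) x"
  shows "is_path V E (p @ [x])"
  using assms unfolding is_path_def
  by (cases p rule: rev_cases) (auto simp: nth_append less_Suc_eq)

lemma is_path_take: "is_path V E p \<Longrightarrow> 0 < k \<Longrightarrow> is_path V E (take k p)"
  unfolding is_path_def by (auto dest: in_set_takeD)

lemma acyclic_path_hd_neighbour:
  assumes "simple_graph V E" "acyclic_graph V E" "is_path V E p"
    and "u \<in> set p" "E u (hd p)"
  shows "u = p ! 1"
proof -
  obtain i where i: "i < length p" "p ! i = u"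
    using assms(4) by (meson in_set_conv_nth)
  have hd: "hd p = p ! 0"
    using assms(3) by (simp add: is_path_def hd_conv_nth)
  have "i \<noteq> 0"
    using i assms(1,5) hd simple_graph_irrefl by metis
  moreover have "\<not> 2 \<le> i"
  proof
    assume "2 \<le> i"
    let ?c = "take (Suc i) p"
    have "is_path V E ?c"
      using is_path_take[OF assms(3)] by simp
    moreover have "3 \<le> length ?c" "last ?c = u"
      using i \<open>2 \<le> i\<close> by (simp_all add: take_Suc_conv_app_nth)
    moreover have "hd ?c = hd p"
      by (cases p) auto
    ultimately show False
      using assms(2,5) unfolding acyclic_graph_def by metis
  qed
  ultimately have "i = 1"
    by linarith
  with i show ?thesis
    by simp
qed

text \<open>The first vertex of a longest path is a leaf.\<close>

lemma tree_has_leaf: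
  assumes "is_tree V E" "2 \<le> card V"
  obtains x y where "x \<in> V" "y \<in> V" "E x y" "\<And>u. E u x \<Longrightarrow> u = y"
proof -
  have sg: "simple_graph V E" and con: "connected_graph V E" and ac: "acyclic_graph V E"
    using assms(1) by (auto simp: is_tree_def)
  have fin: "finite V"
    using sg by (simp add: simple_graph_def)
  obtain a b where ab: "a \<in> V" "b \<in> V" "a \<noteq> b"
    using assms(2) card_le_Suc0_iff_eq[OF fin] by force
  obtain p0 where p0: "is_path V E p0" "hd p0 = a" "last p0 = b"
    using con ab unfolding connected_graph_def by blast
  have "2 \<le> length p0"
    using p0 ab by (cases p0) (auto simp: is_path_def Suc_le_eq split: if_splits)
  then obtain p where p: "is_path V E p" "2 \<le> length p"
    and longest: "\<And>q. is_path V E q \<Longrightarrow> 2 \<le> length q \<Longrightarrow> length q \<le> length p"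
    using ex_has_greatest_nat[of "\<lambda>q. is_path V E q \<and> 2 \<le> length q" p0 length "Suc (card V)"]
      p0(1) is_path_length_le_card[OF _ fin] by (metis le_imp_less_Suc)
  have hd: "hd p = p ! 0"
    using p by (simp add: hd_conv_nth is_path_def)
  have "E (p ! 0) (p ! 1)" "p ! 0 \<in> V" "p ! 1 \<in> V"
    using p unfolding is_path_def by auto
  moreover have "u = p ! 1" if "E u (p ! 0)" for u
  proof (cases "u \<in> set p")
    case True
    then show ?thesis
      using acyclic_path_hd_neighbour[OF sg ac p(1)] that hd by simp
  next
    case False
    then have "is_path V E (u # p)"
      using is_path_Cons[OF p(1)] that hd simple_graph_adj_in_V[OF sg] by simp
    then show ?thesis
      using longest[of "u # p"] p(2) by simp
  qed
  ultimately show ?thesis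
    using that by blast
qed

lemma odd_pair_leaf_or_neighbour:
  assumes tree: "is_tree V E" and "x \<in> V" "y \<in> V" "E x y"
    and leaf: "\<And>u. E u x \<Longrightarrow> u = y"
    and "v \<in> V" "v \<noteq> x" "v \<noteq> y" "\<not> E v y"
  shows "odd_pair V E v x \<or> odd_pair V E v y"
proof -
  have sg: "simple_graph V E" and con: "connected_graph V E"
    using tree by (auto simp: is_tree_def)
  obtain q where q: "is_path V E q" "hd q = v" "last q = y"
    using con \<open>v \<in> V\<close> \<open>y \<in> V\<close> unfolding connected_graph_def by blast
  have q_ne: "q \<noteq> []" and q_dist: "distinct q"
    and q_adj: "\<And>i. Suc i < length q \<Longrightarrow> E (q ! i) (q ! Suc i)"
    using q(1) unfolding is_path_def by auto
  have "x \<notin> set q"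
  proof
    assume "x \<in> set q"
    then obtain i where i: "i < length q" "q ! i = x"
      by (meson in_set_conv_nth)
    have "i \<noteq> 0"
      using i q(2) q_ne \<open>v \<noteq> x\<close> by (metis hd_conv_nth)
    moreover have "i \<noteq> length q - 1"
      using i q(3) q_ne \<open>E x y\<close> simple_graph_irrefl[OF sg] by (metis last_conv_nth)
    ultimately have inner: "0 < i" "Suc i < length q" "i - 1 < length q"
      using i by auto
    then have "q ! (i - 1) = y" "q ! Suc i = y"
      using i leaf q_adj[of "i - 1"] q_adj[of i] simple_graph_sym[OF sg] by auto
    then show False
      using inner q_dist nth_eq_iff_index_eq[of q "i - 1" "Suc i"] by auto
  qed
  then have qx: "is_path V E (q @ [x])"
    using is_path_snoc[OF q(1) \<open>x \<in> V\<close>] q(3) \<open>E x y\<close> simple_graph_sym[OF sg] by simp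
  have "\<not> E v x"
    using leaf \<open>v \<noteq> y\<close> simple_graph_sym[OF sg] by blast
  show ?thesis
  proof (cases "odd (length q - 1)")
    case True
    then show ?thesis
      using q \<open>v \<in> V\<close> \<open>y \<in> V\<close> \<open>\<not> E v y\<close> unfolding odd_pair_def by blast
  next
    case False
    then have "odd (length (q @ [x]) - 1)" "hd (q @ [x]) = v" "last (q @ [x]) = x"
      using q q_ne by auto
    then show ?thesis
      using qx \<open>v \<in> V\<close> \<open>x \<in> V\<close> \<open>\<not> E v x\<close> unfolding odd_pair_def by blast
  qed
qed

lemma finite_odd_pairs:
  "finite V \<Longrightarrow> finite {{u, v} | u v. odd_pair V E u v}"
  by (rule finite_subset[of _ "Pow V"]) (auto simp: odd_pair_def)

lemma op_count_ge_leaf_neighbour: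
  assumes tree: "is_tree V E" and "x \<in> V" "y \<in> V" "E x y"
    and leaf: "\<And>u. E u x \<Longrightarrow> u = y"
  shows "card V - (degree V E y + 1) \<le> op_count V E"
proof -
  have sg: "simple_graph V E"
    using tree by (simp add: is_tree_def)
  have fin: "finite V"
    using sg by (simp add: simple_graph_def)
  define N where "N = insert y {u \<in> V. E u y}"
  have "card N = degree V E y + 1"
    using fin simple_graph_irrefl[OF sg] by (simp add: N_def degree_def)
  moreover have "N \<subseteq> V"
    using \<open>y \<in> V\<close> by (auto simp: N_def)
  ultimately have card_rest: "card (V - N) = card V - (degree V E y + 1)"
    by (metis card_Diff_subset finite_subset fin)
  define pair where "pair v = (if odd_pair V E v x then {v, x} else {v, y})" for v
  have "pair ` (V - N) \<subseteq> {{u, v} | u v. odd_pair V E u v}"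
  proof
    fix s assume "s \<in> pair ` (V - N)"
    then obtain v where v: "v \<in> V - N" "s = pair v"
      by blast
    have "v \<noteq> x"
      using v(1) \<open>E x y\<close> by (auto simp: N_def \<open>x \<in> V\<close>)
    then have "odd_pair V E v x \<or> odd_pair V E v y"
      using v(1) odd_pair_leaf_or_neighbour[OF assms] by (auto simp: N_def)
    then show "s \<in> {{u, v} | u v. odd_pair V E u v}"
      using v(2) unfolding pair_def by auto
  qed
  moreover have "inj_on pair (V - N)"
  proof
    fix v w assume "v \<in> V - N" "w \<in> V - N" "pair v = pair w"
    moreover have "v \<noteq> x" "v \<noteq> y"
      using \<open>v \<in> V - N\<close> \<open>E x y\<close> \<open>x \<in> V\<close> by (auto simp: N_def)
    ultimately show "v = w"
      unfolding pair_def by (auto simp: doubleton_eq_iff split: if_splits)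
  qed
  ultimately show ?thesis
    unfolding op_count_def card_rest[symmetric]
    using card_inj_on_le finite_odd_pairs[OF fin] by blast
qed

lemma dearth_ge_degree_term:
  assumes "finite V" "y \<in> V" "3 \<le> degree V E y"
  shows "real (degree V E y) * (real (degree V E y) - 1) / 6 + real (op_count V E) \<le> dearth V E"
proof -
  have "real (degree V E y) * (real (degree V E y) - 1) / 6
      \<le> (\<Sum>v\<in>{v \<in> V. 3 \<le> degree V E v}. real (degree V E v) * (real (degree V E v) - 1) / 6)"
    by (rule member_le_sum) (use assms in auto)
  then show ?thesis
    unfolding dearth_def by simp
qed

lemma dearth_ge_op_count: "real (op_count V E) \<le> dearth V E"
  unfolding dearth_def by (auto intro!: sum_nonneg)

lemma degree_term_bound:
  fixes d n :: real
  assumes "d + 1 \<le> n"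
  shows "n / 3 - 1 \<le> d * (d - 1) / 6 + (n - d - 1)"
proof -
  have "0 \<le> (d - 3/2)\<^sup>2"
    by simp
  then show ?thesis
    using assms by (simp add: power2_eq_square field_simps)
qed

theorem lemma29:
  fixes V :: "'a set" and E :: "'a \<Rightarrow> 'a \<Rightarrow> bool"
  assumes "is_tree V E" and "card V \<ge> 1"
  shows "dearth V E \<ge> real (card V) / 3 - 1"
proof (cases "card V \<le> 3")
  case True
  then show ?thesis
    using dearth_ge_op_count[of V E] by simp
next
  case False
  then have "2 \<le> card V"
    by linarith
  then obtain x y where leaf: "x \<in> V" "y \<in> V" "E x y" "\<And>u. E u x \<Longrightarrow> u = y"
    using tree_has_leaf[OF assms(1)] by blast
  have sg: "simple_graph V E"
    using assms(1) by (simp add: is_tree_def)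
  define d where "d = degree V E y"
  have "d < card V"
    using degree_less_card[OF sg leaf(2)] by (simp add: d_def)
  moreover have "card V - (d + 1) \<le> op_count V E"
    using op_count_ge_leaf_neighbour[OF assms(1) leaf] by (simp add: d_def)
  ultimately have op: "real (card V) - real d - 1 \<le> real (op_count V E)"
    by linarith
  show ?thesis
  proof (cases "3 \<le> d")
    case True
    have "finite V"
      using sg by (simp add: simple_graph_def)
    have "real (card V) / 3 - 1 \<le> real d * (real d - 1) / 6 + (real (card V) - real d - 1)"
      using degree_term_bound \<open>d < card V\<close> by simp
    also have "\<dots> \<le> real d * (real d - 1) / 6 + real (op_count V E)"
      using op by simp
    also have "\<dots> \<le> dearth V E"
      using dearth_ge_degree_term[of V y E] \<open>finite V\<close> leaf(2) True by (simp add: d_def)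
    finally show ?thesis .
  next
    case False
    then show ?thesis
      using op dearth_ge_op_count[of V E] \<open>\<not> card V \<le> 3\<close> by simp
  qed
qed

end
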